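(* Let $\mathcal{E}=\{n\ge 1: e(n)=e(n+1)\}$. (1) The set $\mathcal{E}$ is infinite. If $m\in\mathcal{E}$, then $n=4m+1$ satisfies $e(n)=e(n+1)=e(n+2)$. Conversely, if $n\ge 1$ satisfies $e(n)=e(n+1)=e(n+2)$, then $n=4m+1$ for some integer $m\in\mathcal{E}$. (2) There is no integer $n\ge 1$ with $e(n)=e(n+1)=e(n+2)=e(n+3)$.
   Context: The Stern polynomials $B_n(t)\in\mathbb{Z}[t]$, $n\ge 0$, are defined by $B_0(t)=0$, $B_1(t)=1$, $B_{2n}(t)=tB_n(t)$ and $B_{2n+1}(t)=B_n(t)+B_{n+1}(t)$ for $n\ge 1$. For $n\ge 1$, $e(n)=\deg_t B_n(t)$. *)

theory Defs
  imports "HOL-Computational_Algebra.Polynomial"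
begin

function stern_poly :: "nat \<Rightarrow> int poly" where
  "stern_poly n =
     (if n = 0 then 0
      else if n = 1 then 1
      else if even n then pCons 0 (stern_poly (n div 2))
      else stern_poly (n div 2) + stern_poly (n div 2 + 1))"
  by pat_completeness auto
termination
  by (relation "measure id") (auto elim!: oddE)

declare stern_poly.simps [simp del]

definition stern_e :: "nat \<Rightarrow> nat" where
  "stern_e n = degree (stern_poly n)"

definition stern_E :: "nat set" where
  "stern_E = {n. n \<ge> 1 \<and> stern_e n = stern_e (n + 1)}"

end

theory Submission
  imports Defs
begin

text \<open>
  All Stern polynomials have nonnegative coefficients, so no cancellation
  occurs in B (2k+1) = B k + B (k+1); hence the degrees satisfy
  e(2k) = e(k) + 1 and e(2k+1) = max (e k) (e (k+1)).  Everything is then governed by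
  the difference sequence  d(n) = e(n+1) - e(n), which obeys the self-contained recursion
  d(2k) = max 0 (d k) - 1  and  d(2k+1) = 1 + min 0 (d k),  and takes values in {-1,0,1}.
  In these terms  n \<in> E  iff  n \<ge> 1 and d n = 0, and the theorem becomes a statement
  about consecutive zeros of d:
  (a) if d m = 0 then d (4m+1) = d (4m+2) = 0;
  (b) if d n = d (n+1) = 0 with n \<ge> 1, then n = 4m+1 for some m \<ge> 1 with d m = 0,
      obtained by descending two binary digits.
  Infinity of E follows from (a) since 2 \<in> E and m < 4m+1; part (2) follows from (b)
  because n and n+1 cannot both be congruent to 1 modulo 4.
\<close>

definition nonneg_poly :: "'a::linordered_idom poly \<Rightarrow> bool" where
  "nonneg_poly p \<longleftrightarrow> (\<forall>i. 0 \<le> coeff p i)"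

lemma nonneg_poly_add: "nonneg_poly p \<Longrightarrow> nonneg_poly q \<Longrightarrow> nonneg_poly (p + q)"
  by (simp add: nonneg_poly_def)

lemma nonneg_poly_pCons: "0 \<le> a \<Longrightarrow> nonneg_poly p \<Longrightarrow> nonneg_poly (pCons a p)"
  by (simp add: nonneg_poly_def coeff_pCons split: nat.split)

lemma nonneg_poly_add_eq_0:
  assumes "nonneg_poly p" "nonneg_poly q" "p + q = 0"
  shows "p = 0"
proof -
  have "coeff p i = 0" for i
  proof -
    have "coeff p i + coeff q i = 0"
      using assms(3) by (metis coeff_add coeff_0)
    then show ?thesis
      using assms(1,2) unfolding nonneg_poly_def by (metis add_nonneg_eq_0_iff)
  qed
  then show ?thesis by (simp add: poly_eq_iff)
qed

lemma degree_add_nonneg_poly: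
  assumes p: "nonneg_poly p" and q: "nonneg_poly q"
  shows "degree (p + q) = max (degree p) (degree q)"
proof (cases "p = 0 \<or> q = 0")
  case True
  then show ?thesis by auto
next
  case False
  define d where "d = max (degree p) (degree q)"
  have "coeff p d \<noteq> 0 \<or> coeff q d \<noteq> 0"
    using False unfolding d_def by (cases "degree p \<le> degree q") (auto simp: max_def)
  then have "coeff (p + q) d \<noteq> 0"
    using p q unfolding nonneg_poly_def coeff_add by (metis add_nonneg_eq_0_iff)
  then have "d \<le> degree (p + q)" by (rule le_degree)
  moreover have "degree (p + q) \<le> d"
    unfolding d_def by (rule degree_add_le_max)
  ultimately show ?thesis
    unfolding d_def by (rule antisym[rotated])
qed

lemma stern_poly_0 [simp]: "stern_poly 0 = 0"
  by (subst stern_poly.simps) simp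

lemma stern_poly_1 [simp]: "stern_poly (Suc 0) = 1"
  by (subst stern_poly.simps) simp

text \<open>Both recursion equations hold for every k, including k = 0.  Odd indices are written
  with Suc, the simplifier's normal form of 2k+1.\<close>

lemma stern_poly_even: "stern_poly (2 * k) = pCons 0 (stern_poly k)"
  by (subst stern_poly.simps) auto

lemma stern_poly_odd: "stern_poly (Suc (2 * k)) = stern_poly k + stern_poly (Suc k)"
  by (cases "k = 0") (subst stern_poly.simps; simp)+

lemma binary_induct [case_names zero one even odd]:
  fixes P :: "nat \<Rightarrow> bool" and n :: nat
  assumes "P 0" "P 1"
    and even: "\<And>k. k \<ge> 1 \<Longrightarrow> P k \<Longrightarrow> P (2 * k)"
    and odd: "\<And>k. k \<ge> 1 \<Longrightarrow> P k \<Longrightarrow> P (k + 1) \<Longrightarrow> P (2 * k + 1)"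
  shows "P n"
proof (induction n rule: less_induct)
  case (less n)
  show ?case
  proof (cases "n \<le> 1")
    case True
    then show ?thesis using assms(1,2) by (cases n) auto
  next
    case False
    obtain k where k: "n = 2 * k \<or> n = 2 * k + 1"
      by (meson evenE oddE)
    with False have "k \<ge> 1" by auto
    with k show ?thesis
      using less.IH even odd by auto
  qed
qed

lemma nonneg_poly_stern_poly: "nonneg_poly (stern_poly n)"
proof (induction n rule: binary_induct)
  case (even k)
  then show ?case by (simp add: stern_poly_even nonneg_poly_pCons)
next
  case (odd k)
  then show ?case by (simp add: stern_poly_odd nonneg_poly_add)
qed (auto simp: nonneg_poly_def)

lemma stern_poly_nonzero: "n \<ge> 1 \<Longrightarrow> stern_poly n \<noteq> 0"
proof (induction n rule: binary_induct)
  case (even k)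
  then show ?case by (simp add: stern_poly_even)
next
  case (odd k)
  then show ?case
    using nonneg_poly_add_eq_0[OF nonneg_poly_stern_poly nonneg_poly_stern_poly]
    by (auto simp: stern_poly_odd)
qed auto

text \<open>The degree recursion; the even case needs B k \<noteq> 0, the odd one the absence of
  cancellation.\<close>

lemma stern_e_even: "k \<ge> 1 \<Longrightarrow> stern_e (2 * k) = stern_e k + 1"
  by (simp add: stern_e_def stern_poly_even degree_pCons_eq stern_poly_nonzero)

lemma stern_e_odd: "stern_e (Suc (2 * k)) = max (stern_e k) (stern_e (Suc k))"
  unfolding stern_e_def stern_poly_odd
  by (simp add: degree_add_nonneg_poly nonneg_poly_stern_poly)

definition stern_delta :: "nat \<Rightarrow> int" where
  "stern_delta n = int (stern_e (n + 1)) - int (stern_e n)"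

lemma stern_E_iff: "n \<in> stern_E \<longleftrightarrow> n \<ge> 1 \<and> stern_delta n = 0"
  by (auto simp: stern_E_def stern_delta_def)

lemma stern_delta_even: "k \<ge> 1 \<Longrightarrow> stern_delta (2 * k) = max 0 (stern_delta k) - 1"
  by (simp add: stern_delta_def stern_e_even stern_e_odd)

lemma stern_delta_odd: "stern_delta (Suc (2 * k)) = 1 + min 0 (stern_delta k)"
proof -
  have "stern_e (Suc (Suc (2 * k))) = stern_e (Suc k) + 1"
    using stern_e_even[of "Suc k"] by simp
  then show ?thesis by (simp add: stern_delta_def stern_e_odd)
qed

lemma stern_delta_0: "stern_delta 0 = 0"
  by (simp add: stern_delta_def stern_e_def)

lemma stern_delta_1: "stern_delta (Suc 0) = 1"
  using stern_delta_odd[of 0] by (simp add: stern_delta_0)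

lemma stern_delta_bound: "\<bar>stern_delta n\<bar> \<le> 1"
proof (induction n rule: binary_induct)
  case zero
  then show ?case by (simp add: stern_delta_0)
next
  case one
  then show ?case by (simp add: stern_delta_1)
next
  case (even k)
  then show ?case by (simp add: stern_delta_even)
next
  case (odd k)
  then show ?case by (simp add: stern_delta_odd)
qed

lemma stern_delta_odd_nonneg: "stern_delta (2 * k + 1) \<ge> 0"
  using stern_delta_bound[of k] by (simp add: stern_delta_odd)

lemma stern_delta_zero_pair:
  assumes "m \<ge> 1" "stern_delta m = 0"
  shows "stern_delta (4 * m + 1) = 0" "stern_delta (4 * m + 2) = 0"
proof -
  have "stern_delta (2 * m) = -1" "stern_delta (2 * m + 1) = 1"
    using assms by (simp_all add: stern_delta_even stern_delta_odd)
  then show "stern_delta (4 * m + 1) = 0" "stern_delta (4 * m + 2) = 0"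
    using stern_delta_odd[of "2 * m"] stern_delta_even[of "Suc (2 * m)"] by simp_all
qed

lemma zero_pair_descent:
  assumes "n \<ge> 1" "stern_delta n = 0" "stern_delta (n + 1) = 0"
  obtains k where "k \<ge> 1" "n = 2 * k + 1" "stern_delta k = -1" "stern_delta (k + 1) = 1"
proof -
  obtain k where k: "n = 2 * k \<or> n = 2 * k + 1"
    by (metis evenE oddE)
  show ?thesis
  proof (cases "n = 2 * k")
    case True
    then have "k \<ge> 1" using assms(1) by simp
    then have "stern_delta k = 1" "stern_delta k = -1"
      using True assms(2,3) by (simp_all add: stern_delta_even stern_delta_odd)
    then show ?thesis by simp
  next
    case False
    with k have n: "n = 2 * k + 1" by simp
    have "k \<ge> 1"
      using n assms(2) stern_delta_1 by (cases k) auto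
    moreover have "stern_delta k = -1"
      using n assms(2) stern_delta_bound[of k] by (simp add: stern_delta_odd)
    moreover have "stern_delta (k + 1) = 1"
      using n assms(3) stern_delta_bound[of "k + 1"] stern_delta_even[of "k + 1"]
      by (simp add: algebra_simps)
    ultimately show ?thesis using n that by blast
  qed
qed

lemma sign_change_descent:
  assumes "k \<ge> 1" "stern_delta k = -1" "stern_delta (k + 1) = 1"
  obtains m where "m \<ge> 1" "k = 2 * m" "stern_delta m = 0"
proof -
  obtain m where m: "k = 2 * m \<or> k = 2 * m + 1"
    by (metis evenE oddE)
  have "k \<noteq> 2 * m + 1"
    using assms(2) stern_delta_odd_nonneg[of m] by auto
  with m have k: "k = 2 * m" by simp
  with assms(1) have "m \<ge> 1" by simp
  moreover have "stern_delta m \<le> 0" "stern_delta m \<ge> 0"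
    using assms(2,3) k \<open>m \<ge> 1\<close> by (simp_all add: stern_delta_even stern_delta_odd)
  ultimately show ?thesis using k that by simp
qed

lemma zero_pair_origin:
  assumes "n \<ge> 1" "stern_delta n = 0" "stern_delta (n + 1) = 0"
  shows "\<exists>m \<in> stern_E. n = 4 * m + 1"
proof -
  obtain k where k: "k \<ge> 1" "n = 2 * k + 1" "stern_delta k = -1" "stern_delta (k + 1) = 1"
    using zero_pair_descent[OF assms] .
  obtain m where "m \<ge> 1" "k = 2 * m" "stern_delta m = 0"
    using sign_change_descent[OF k(1,3,4)] .
  then show ?thesis
    using k(2) by (auto simp: stern_E_iff)
qed

lemma infinite_if_closed_increasing:
  fixes S :: "nat set"
  assumes "a \<in> S" and closed: "\<And>x. x \<in> S \<Longrightarrow> f x \<in> S \<and> x < f x"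
  shows "infinite S"
proof -
  have "\<exists>x \<in> S. N < x" for N
  proof (induction N)
    case 0
    then show ?case using assms by (metis gr0I closed)
  next
    case (Suc N)
    then show ?case using closed by (metis Suc_lessI)
  qed
  then show ?thesis
    unfolding infinite_nat_iff_unbounded by blast
qed

theorem theorem4p6:
  shows "infinite stern_E
    \<and> (\<forall>m \<in> stern_E. stern_e (4*m+1) = stern_e (4*m+2) \<and> stern_e (4*m+2) = stern_e (4*m+3))
    \<and> (\<forall>n::nat. n \<ge> 1 \<and> stern_e n = stern_e (n+1) \<and> stern_e (n+1) = stern_e (n+2)
          \<longrightarrow> (\<exists>m \<in> stern_E. n = 4*m+1))
    \<and> \<not> (\<exists>n::nat. n \<ge> 1 \<and> stern_e n = stern_e (n+1) \<and> stern_e (n+1) = stern_e (n+2)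
          \<and> stern_e (n+2) = stern_e (n+3))"
proof (intro conjI)
  have step: "4 * m + 1 \<in> stern_E \<and> m < 4 * m + 1" if "m \<in> stern_E" for m
    using that stern_delta_zero_pair by (auto simp: stern_E_iff)
  have "2 \<in> stern_E"
    using stern_delta_even[of 1] stern_delta_1 by (simp add: stern_E_iff)
  then show "infinite stern_E"
    using step by (rule infinite_if_closed_increasing)
  show "\<forall>m \<in> stern_E. stern_e (4*m+1) = stern_e (4*m+2) \<and> stern_e (4*m+2) = stern_e (4*m+3)"
    using stern_delta_zero_pair by (auto simp: stern_E_iff stern_delta_def numeral_3_eq_3)
  show "\<forall>n::nat. n \<ge> 1 \<and> stern_e n = stern_e (n+1) \<and> stern_e (n+1) = stern_e (n+2)
          \<longrightarrow> (\<exists>m \<in> stern_E. n = 4*m+1)"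
    using zero_pair_origin by (auto simp: stern_delta_def numeral_2_eq_2)
  show "\<not> (\<exists>n::nat. n \<ge> 1 \<and> stern_e n = stern_e (n+1) \<and> stern_e (n+1) = stern_e (n+2)
          \<and> stern_e (n+2) = stern_e (n+3))"
  proof
    assume "\<exists>n::nat. n \<ge> 1 \<and> stern_e n = stern_e (n+1) \<and> stern_e (n+1) = stern_e (n+2)
          \<and> stern_e (n+2) = stern_e (n+3)"
    then obtain n where "n \<ge> 1" "stern_delta n = 0" "stern_delta (n+1) = 0" "stern_delta (n+2) = 0"
      by (auto simp: stern_delta_def numeral_2_eq_2 numeral_3_eq_3)
    then obtain m m' where "n = 4*m+1" "n+1 = 4*m'+1"
      using zero_pair_origin[of n] zero_pair_origin[of "n+1"] by (auto simp: numeral_2_eq_2)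
    \<comment> \<open>n and n+1 cannot both be congruent to 1 modulo 4\<close>
    then show False by presburger
  qed
qed

end
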